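(* Let $T\ge1$ and $d_1,\dots,d_T\in\{0,1,2,\dots\}$. For $t\in[T]$ let $m_t=\{\tau\in[t-1]:\tau+d_\tau\ge t\}$, let $\sigma_{\max}=\max_{t\in[T]}|m_t|$, and for $S\subseteq[T]$ let $\sigma_{\max}^S=\max_{\tau\in[T]}|m_\tau\cap S|$ and $\bar S=[T]\setminus S$. Then $$\sigma_{\max}=\min_{S\subseteq[T]}\left(|S|+\sigma_{\max}^{\bar S}\right).$$
   Context: $[k]=\{1,\dots,k\}$, $[0]=\emptyset$. *)

theory Defs
  imports Main
begin

definition mset_delay :: "(nat \<Rightarrow> nat) \<Rightarrow> nat \<Rightarrow> nat set" where
  "mset_delay d t = {\<tau> \<in> {1..t - 1}. \<tau> + d \<tau> \<ge> t}"

definition sigma_max :: "nat \<Rightarrow> (nat \<Rightarrow> nat) \<Rightarrow> nat" where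
  "sigma_max T d = Max ((\<lambda>t. card (mset_delay d t)) ` {1..T})"

definition sigma_max_on :: "nat \<Rightarrow> (nat \<Rightarrow> nat) \<Rightarrow> nat set \<Rightarrow> nat" where
  "sigma_max_on T d S = Max ((\<lambda>\<tau>. card (mset_delay d \<tau> \<inter> S)) ` {1..T})"

end

theory Submission
  imports Defs
begin

text \<open>The choice \<open>S = {}\<close> attains \<open>sigma_max\<close>. Conversely, for any \<open>S\<close> and a step \<open>t\<close>
  with \<open>|m t| = sigma_max\<close>, the part of \<open>m t\<close> inside \<open>S\<close> has at most \<open>|S|\<close> elements
  and the part outside \<open>S\<close> at most the maximum over the complement of \<open>S\<close>.\<close>

lemma mset_delay_subset: "mset_delay d t \<subseteq> {1..<t}"
  unfolding mset_delay_def by auto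

lemma finite_mset_delay [simp]: "finite (mset_delay d t)"
  using finite_subset[OF mset_delay_subset] by blast

lemma card_mset_delay_Int_le_sigma_max_on:
  "t \<in> {1..T} \<Longrightarrow> card (mset_delay d t \<inter> A) \<le> sigma_max_on T d A"
  unfolding sigma_max_on_def by (intro Max_ge) auto

lemma sigma_max_on_superset:
  assumes "{1..T} \<subseteq> A"
  shows "sigma_max_on T d A = sigma_max T d"
proof -
  have "mset_delay d t \<inter> A = mset_delay d t" if "t \<in> {1..T}" for t
  proof -
    have "mset_delay d t \<subseteq> {1..T}"
      using mset_delay_subset[of d t] that by auto
    then show ?thesis
      using assms by blast
  qed
  then show ?thesis
    unfolding sigma_max_on_def sigma_max_def by (intro arg_cong[where f = Max] image_cong) simp_all
qed

lemma sigma_max_attained: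
  assumes "T \<ge> 1"
  obtains t where "t \<in> {1..T}" and "sigma_max T d = card (mset_delay d t)"
proof -
  have "(\<lambda>t. card (mset_delay d t)) ` {1..T} \<noteq> {}"
    using assms by auto
  from Max_in[OF _ this] show ?thesis
    using that unfolding sigma_max_def by auto
qed

lemma sigma_max_le_card_plus_sigma_max_on:
  assumes "T \<ge> 1" and "finite S"
  shows "sigma_max T d \<le> card S + sigma_max_on T d ({1..T} - S)"
proof -
  obtain t where t: "t \<in> {1..T}" and max_t: "sigma_max T d = card (mset_delay d t)"
    using sigma_max_attained[OF assms(1)] .
  have outside: "mset_delay d t - S = mset_delay d t \<inter> ({1..T} - S)"
    using mset_delay_subset[of d t] t by auto
  have "sigma_max T d = card (mset_delay d t \<inter> S) + card (mset_delay d t - S)"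
    using max_t card_Int_Diff[of "mset_delay d t" S] by simp
  also have "card (mset_delay d t \<inter> S) \<le> card S"
    using assms(2) by (intro card_mono) auto
  also have "card (mset_delay d t - S) \<le> sigma_max_on T d ({1..T} - S)"
    unfolding outside using t by (rule card_mset_delay_Int_le_sigma_max_on)
  finally show ?thesis by simp
qed

theorem lemmaA8:
  fixes T :: nat and d :: "nat \<Rightarrow> nat"
  assumes "T \<ge> 1"
  shows "sigma_max T d =
    Min ((\<lambda>S. card S + sigma_max_on T d ({1..T} - S)) ` Pow {1..T})"
proof (rule sym, rule Min_eqI)
  show "finite ((\<lambda>S. card S + sigma_max_on T d ({1..T} - S)) ` Pow {1..T})"
    by simp
  have "sigma_max T d = card {} + sigma_max_on T d ({1..T} - {})"
    by (simp add: sigma_max_on_superset)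
  then show "sigma_max T d \<in> (\<lambda>S. card S + sigma_max_on T d ({1..T} - S)) ` Pow {1..T}"
    by blast
next
  fix y
  assume "y \<in> (\<lambda>S. card S + sigma_max_on T d ({1..T} - S)) ` Pow {1..T}"
  then obtain S where "S \<subseteq> {1..T}" and "y = card S + sigma_max_on T d ({1..T} - S)"
    by blast
  then show "sigma_max T d \<le> y"
    using sigma_max_le_card_plus_sigma_max_on[OF assms] finite_subset by blast
qed

end
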